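(* Any two elements of $B^{(k,r)}$ are intertwined.
   Context: Let $P=\mathbb Z^n$. For $\lambda\in P$, $\rho(\lambda)$ is the unique permutation of $(\frac{n-1}2,\dots,-\frac{n-1}2)$ with $\rho(\lambda)_i>\rho(\lambda)_j$ iff $\lambda_i>\lambda_j$ or ($\lambda_i=\lambda_j$, $i<j$). $\omega\lambda=(\lambda_2,\dots,\lambda_n,\lambda_1+1)$; $s_i\lambda$ swaps $\lambda_i,\lambda_{i+1}$. Fix $1\le k\le n-1$, $r\ge2$, $g=\gcd(k+1,r-1)$, $\tau=e^{2\pi\sqrt{-1}/(r-1)}$, specialization $(\ast)$: $t=u^{(r-1)/g}$, $q=\tau u^{-(k+1)/g}$. $u_\lambda(f)=f(t^{-\rho(\lambda)_1}q^{-\lambda_1},\dots,t^{-\rho(\lambda)_n}q^{-\lambda_n})$. "Intertwined" is the equivalence relation on $P$ generated by $\lambda\sim\omega\lambda$ and by $\lambda\sim s_i\lambda$ whenever $s_i\lambda\ne\lambda$ and, at $(\ast)$, $u_\lambda(x_i/x_{i+1})\notin\{1,t,t^{-1}\}$. For $a\ge2,b\ge1$, $(i,j)$ is a neighborhood of type $(a,b)$ in $\lambda$ if $\rho(\lambda)_i-\rho(\lambda)_j=a-1$ and either $\lambda_i-\lambda_j\le b-1$, or $\lambda_i-\lambda_j=b$ and $j<i$. $B^{(k,r)}$ is the set of $\lambda\in P$ having no neighborhood of type $(k+1,r-1)$. *)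

theory Defs
  imports Complex_Main
begin

text \<open>Weights lambda in P = Z^n are int lists of length n; positions are 0-based,
  so the paper's index i (1..n) is position i-1 here.\<close>

definition rank_pos :: "int list \<Rightarrow> nat \<Rightarrow> nat" where
  "rank_pos lam i = card {j. j < length lam \<and>
      (lam ! j > lam ! i \<or> (lam ! j = lam ! i \<and> j < i))}"

text \<open>rho(lambda)_i: the unique permutation of ((n-1)/2, ..., -(n-1)/2) ordered as in the paper;
  the entry at position i is (n-1)/2 minus the number of positions ranked above i.\<close>
definition rho :: "int list \<Rightarrow> nat \<Rightarrow> rat" where
  "rho lam i = (of_nat (length lam) - 1) / 2 - of_nat (rank_pos lam i)"

definition omega :: "int list \<Rightarrow> int list" where
  "omega lam = tl lam @ [hd lam + 1]"

definition swap_at :: "nat \<Rightarrow> int list \<Rightarrow> int list" where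
  "swap_at i lam = lam[i := lam ! Suc i, Suc i := lam ! i]"

text \<open>Monomials c * u^e (c a nonzero complex number, e a rational exponent) in the
  indeterminate u, represented as pairs (c, e); two such monomials are equal iff
  the pairs are equal.\<close>
type_synonym mono = "complex \<times> rat"

definition mono_mult :: "mono \<Rightarrow> mono \<Rightarrow> mono" where
  "mono_mult a b = (fst a * fst b, snd a + snd b)"

definition mono_div :: "mono \<Rightarrow> mono \<Rightarrow> mono" where
  "mono_div a b = (fst a / fst b, snd a - snd b)"

definition gg :: "nat \<Rightarrow> nat \<Rightarrow> nat" where
  "gg k r = gcd (k + 1) (r - 1)"

definition tau :: "nat \<Rightarrow> complex" where
  "tau r = cis (2 * pi / real (r - 1))"

text \<open>Specialization: t = u^((r-1)/g), so t^s = u^(s(r-1)/g).\<close>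
definition t_pow :: "nat \<Rightarrow> nat \<Rightarrow> rat \<Rightarrow> mono" where
  "t_pow k r s = (1, s * of_nat (r - 1) / of_nat (gg k r))"

text \<open>Specialization: q = tau * u^(-(k+1)/g), so q^m = tau^m u^(-m(k+1)/g).\<close>
definition q_pow :: "nat \<Rightarrow> nat \<Rightarrow> int \<Rightarrow> mono" where
  "q_pow k r m = (tau r powi m, - of_int m * of_nat (k + 1) / of_nat (gg k r))"

definition u_x :: "nat \<Rightarrow> nat \<Rightarrow> int list \<Rightarrow> nat \<Rightarrow> mono" where
  "u_x k r lam i = mono_mult (t_pow k r (- rho lam i)) (q_pow k r (- (lam ! i)))"

definition u_ratio :: "nat \<Rightarrow> nat \<Rightarrow> int list \<Rightarrow> nat \<Rightarrow> mono" where
  "u_ratio k r lam i = mono_div (u_x k r lam i) (u_x k r lam (Suc i))"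

inductive intertwin_step :: "nat \<Rightarrow> nat \<Rightarrow> int list \<Rightarrow> int list \<Rightarrow> bool"
  for k r where
  omega_step: "lam \<noteq> [] \<Longrightarrow> intertwin_step k r lam (omega lam)"
| swap_step: "Suc i < length lam \<Longrightarrow> swap_at i lam \<noteq> lam \<Longrightarrow>
     u_ratio k r lam i \<notin> {(1, 0), t_pow k r 1, t_pow k r (-1)} \<Longrightarrow>
     intertwin_step k r lam (swap_at i lam)"

definition intertwined :: "nat \<Rightarrow> nat \<Rightarrow> int list \<Rightarrow> int list \<Rightarrow> bool" where
  "intertwined k r = equivclp (intertwin_step k r)"

definition neighborhood :: "nat \<Rightarrow> nat \<Rightarrow> int list \<Rightarrow> nat \<Rightarrow> nat \<Rightarrow> bool" where
  "neighborhood a b lam i j \<longleftrightarrow> i < length lam \<and> j < length lam \<and>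
     rho lam i - rho lam j = of_nat a - 1 \<and>
     (lam ! i - lam ! j \<le> int b - 1 \<or> (lam ! i - lam ! j = int b \<and> j < i))"

definition B :: "nat \<Rightarrow> nat \<Rightarrow> nat \<Rightarrow> int list set" where
  "B n k r = {lam. length lam = n \<and> \<not> (\<exists>i j. neighborhood (k + 1) (r - 1) lam i j)}"

end

theory Submission
  imports Defs "HOL-Library.Multiset" "HOL-Library.Real_Mod" "HOL-Combinatorics.Transposition"
begin

text \<open>Membership in \<open>B(k,r)\<close> says that entries whose ranks differ by \<open>k\<close> differ by at least
  \<open>r - 1\<close>, ties broken by position. This is preserved by \<open>\<omega>\<close> and by swapping an ascent, and
  the swap of an ascent is never blocked at the specialization, so bubble sort intertwines every
  element of \<open>B\<close> with a dominant one. For dominant \<open>\<lambda>\<close>, applying \<open>\<omega>\<^sup>j\<close> and sorting again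
  raises the first \<open>j\<close> entries by one: this raises a single consecutive gap, or translates \<open>\<lambda>\<close>
  when \<open>j = n\<close>. Hence every dominant element of \<open>B\<close> is intertwined with the staircase
  \<open>((n-1)G, \<dots>, G, 0)\<close> for all large \<open>G\<close>, and any two elements of \<open>B\<close> meet at a common
  staircase.\<close>

definition exceeds_by :: "int \<Rightarrow> int list \<Rightarrow> nat \<Rightarrow> nat \<Rightarrow> bool" where
  "exceeds_by d lam i j \<longleftrightarrow> lam ! i - lam ! j > d \<or> (lam ! i - lam ! j = d \<and> i < j)"

text \<open>\<open>outranks lam j i\<close> is the order defining \<open>\<rho>\<close>: it holds iff \<open>\<rho>(\<lambda>)\<^sub>j > \<rho>(\<lambda>)\<^sub>i\<close>.\<close>

abbreviation outranks :: "int list \<Rightarrow> nat \<Rightarrow> nat \<Rightarrow> bool" where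
  "outranks lam \<equiv> exceeds_by 0 lam"

lemma exceeds_by_trans:
  "exceeds_by d lam x y \<Longrightarrow> exceeds_by e lam y z \<Longrightarrow> exceeds_by (d + e) lam x z"
  unfolding exceeds_by_def by auto

lemma rank_pos_eq_card: "rank_pos lam i = card {j. j < length lam \<and> outranks lam j i}"
  unfolding rank_pos_def exceeds_by_def by (rule arg_cong[where f = card]) auto

lemma rank_pos_less_iff:
  assumes "x < length lam" "y < length lam"
  shows "rank_pos lam x < rank_pos lam y \<longleftrightarrow> outranks lam x y"
proof
  show "outranks lam x y" if "rank_pos lam x < rank_pos lam y"
  proof (rule ccontr)
    assume "\<not> outranks lam x y"
    then have "{j. j < length lam \<and> outranks lam j y} \<subseteq> {j. j < length lam \<and> outranks lam j x}"
      unfolding exceeds_by_def by auto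
    then have "rank_pos lam y \<le> rank_pos lam x"
      unfolding rank_pos_eq_card by (intro card_mono) auto
    with that show False by simp
  qed
  show "rank_pos lam x < rank_pos lam y" if "outranks lam x y"
  proof -
    have "{j. j < length lam \<and> outranks lam j x} \<subset> {j. j < length lam \<and> outranks lam j y}"
      using that assms unfolding exceeds_by_def by auto
    then show ?thesis
      unfolding rank_pos_eq_card by (intro psubset_card_mono) auto
  qed
qed

lemma rank_pos_le_iff:
  assumes "x < length lam" "y < length lam"
  shows "rank_pos lam x \<le> rank_pos lam y \<longleftrightarrow> x = y \<or> outranks lam x y"
proof -
  have "rank_pos lam x \<le> rank_pos lam y \<longleftrightarrow> \<not> outranks lam y x"
    using rank_pos_less_iff[OF assms(2,1)] by (simp add: not_less[symmetric])
  also have "\<dots> \<longleftrightarrow> x = y \<or> outranks lam x y"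
    unfolding exceeds_by_def by auto
  finally show ?thesis .
qed

lemma rank_pos_less_length:
  assumes "x < length lam"
  shows "rank_pos lam x < length lam"
proof -
  have "{j. j < length lam \<and> outranks lam j x} \<subseteq> {..<length lam} - {x}"
    unfolding exceeds_by_def by auto
  then have "rank_pos lam x \<le> card ({..<length lam} - {x})"
    unfolding rank_pos_eq_card by (intro card_mono) auto
  with assms show ?thesis by simp
qed

lemma bij_betw_rank_pos: "bij_betw (rank_pos lam) {..<length lam} {..<length lam}"
proof -
  have "inj_on (rank_pos lam) {..<length lam}"
  proof (rule inj_onI)
    fix x y assume "x \<in> {..<length lam}" "y \<in> {..<length lam}" "rank_pos lam x = rank_pos lam y"
    then show "x = y" using rank_pos_le_iff[of x lam y] rank_pos_less_iff[of x lam y] by auto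
  qed
  then show ?thesis
    unfolding bij_betw_def by (intro conjI endo_inj_surj) (auto simp: rank_pos_less_length)
qed

lemma rank_pos_relabel:
  assumes \<sigma>: "bij_betw \<sigma> {..<length w} {..<length lam}"
    and order: "\<And>a b. a < length w \<Longrightarrow> b < length w \<Longrightarrow> outranks w a b \<longleftrightarrow> outranks lam (\<sigma> a) (\<sigma> b)"
    and a: "a < length w"
  shows "rank_pos w a = rank_pos lam (\<sigma> a)"
proof -
  have "{j. j < length lam \<and> outranks lam j (\<sigma> a)} = \<sigma> ` {j. j < length w \<and> outranks w j a}"
  proof safe
    fix x assume "x < length lam" "outranks lam x (\<sigma> a)"
    moreover obtain b where "b < length w" "x = \<sigma> b"
      using \<sigma> \<open>x < length lam\<close> unfolding bij_betw_def by (metis imageE lessThan_iff)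
    ultimately show "x \<in> \<sigma> ` {j. j < length w \<and> outranks w j a}"
      using order a by auto
  qed (use \<sigma> order a in \<open>auto simp: bij_betw_def\<close>)
  moreover have "inj_on \<sigma> {j. j < length w \<and> outranks w j a}"
    using \<sigma> unfolding bij_betw_def by (auto intro: inj_on_subset)
  ultimately show ?thesis
    unfolding rank_pos_eq_card by (simp add: card_image)
qed

definition spaced :: "nat \<Rightarrow> int \<Rightarrow> int list \<Rightarrow> bool" where
  "spaced k d lam \<longleftrightarrow> (\<forall>i<length lam. \<forall>j<length lam.
     rank_pos lam j = rank_pos lam i + k \<longrightarrow> exceeds_by d lam i j)"

lemma mem_B_iff:
  assumes "2 \<le> r"
  shows "lam \<in> B n k r \<longleftrightarrow> length lam = n \<and> spaced k (int r - 1) lam"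
proof -
  have "neighborhood (k + 1) (r - 1) lam i j \<longleftrightarrow> i < length lam \<and> j < length lam \<and>
      rank_pos lam j = rank_pos lam i + k \<and> \<not> exceeds_by (int r - 1) lam i j" for i j
  proof -
    have "rho lam i - rho lam j = of_nat (k + 1) - 1 \<longleftrightarrow> rank_pos lam j = rank_pos lam i + k"
      unfolding rho_def by (simp add: algebra_simps flip: of_nat_add)
    moreover have "int (r - 1) = int r - 1" using assms by simp
    ultimately show ?thesis
      unfolding neighborhood_def exceeds_by_def using assms by (cases "i = j") auto
  qed
  then show ?thesis unfolding B_def spaced_def by auto
qed

lemma spaced_obtain_next:
  assumes "spaced k d lam" "x < length lam" "y < length lam"
    and "rank_pos lam x + k \<le> rank_pos lam y"
  obtains z where "z < length lam" "rank_pos lam z = rank_pos lam x + k" "exceeds_by d lam x z"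
proof -
  have "rank_pos lam x + k < length lam"
    using assms(3,4) rank_pos_less_length[of y lam] by simp
  then obtain z where "z < length lam" "rank_pos lam z = rank_pos lam x + k"
    using bij_betw_rank_pos[of lam] unfolding bij_betw_def by (metis imageE lessThan_iff)
  with assms show thesis using that unfolding spaced_def by blast
qed

lemma spaced_exceeds_by_mult:
  assumes spaced: "spaced k d lam" and "0 < m"
    and "x < length lam" "y < length lam" "rank_pos lam x + m * k \<le> rank_pos lam y"
  shows "exceeds_by (int m * d) lam x y"
  using assms(2-)
proof (induction m arbitrary: x rule: nat_induct_non_zero)
  case 1
  then obtain z where z: "z < length lam" "rank_pos lam z = rank_pos lam x + k" "exceeds_by d lam x z"
    using spaced_obtain_next[OF spaced] by auto
  have "z = y \<or> outranks lam z y"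
    using rank_pos_le_iff[OF z(1) \<open>y < length lam\<close>] z(2) 1 by simp
  then show ?case using exceeds_by_trans[OF z(3)] z(3) by fastforce
next
  case (Suc m)
  have "rank_pos lam x + k \<le> rank_pos lam y" using Suc.prems(3) by simp
  then obtain z where z: "z < length lam" "rank_pos lam z = rank_pos lam x + k" "exceeds_by d lam x z"
    using spaced_obtain_next[OF spaced Suc.prems(1,2)] by blast
  have "exceeds_by (int m * d) lam z y"
    using Suc.IH[OF z(1) \<open>y < length lam\<close>] z(2) Suc.prems(3) by simp
  from exceeds_by_trans[OF z(3) this] show ?case by (simp add: algebra_simps)
qed

lemma spaced_relabel:
  assumes \<sigma>: "bij_betw \<sigma> {..<length w} {..<length lam}"
    and order: "\<And>a b. a < length w \<Longrightarrow> b < length w \<Longrightarrow>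
      outranks w a b \<longleftrightarrow> outranks lam (\<sigma> a) (\<sigma> b)"
    and exceeds: "\<And>a b. a < length w \<Longrightarrow> b < length w \<Longrightarrow> outranks w a b \<Longrightarrow>
      exceeds_by d lam (\<sigma> a) (\<sigma> b) \<Longrightarrow> exceeds_by d w a b"
    and "0 < k" and spaced: "spaced k d lam"
  shows "spaced k d w"
  unfolding spaced_def
proof (intro allI impI)
  fix a b assume a: "a < length w" and b: "b < length w"
    and ab: "rank_pos w b = rank_pos w a + k"
  have "\<sigma> a < length lam" "\<sigma> b < length lam"
    using \<sigma> a b unfolding bij_betw_def by auto
  moreover have "rank_pos lam (\<sigma> b) = rank_pos lam (\<sigma> a) + k"
    using ab rank_pos_relabel[OF \<sigma> order] a b by simp
  ultimately have "exceeds_by d lam (\<sigma> a) (\<sigma> b)"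
    using spaced unfolding spaced_def by blast
  moreover have "outranks w a b"
    using ab \<open>0 < k\<close> rank_pos_less_iff[OF a b] by simp
  ultimately show "exceeds_by d w a b" using exceeds a b by blast
qed

lemma length_omega: "lam \<noteq> [] \<Longrightarrow> length (omega lam) = length lam"
  unfolding omega_def by simp

lemma omega_nth:
  assumes "lam \<noteq> []" "a < length lam"
  shows "omega lam ! a = lam ! (Suc a mod length lam) + (if Suc a = length lam then 1 else 0)"
  using assms unfolding omega_def by (cases lam) (auto simp: nth_append mod_Suc)

text \<open>The \<open>+1\<close> on the entry moved to the end exactly compensates its loss of priority in ties.\<close>

lemma exceeds_by_omega_iff:
  assumes "lam \<noteq> []" "a < length lam" "b < length lam"
  shows "exceeds_by d (omega lam) a b \<longleftrightarrow>
    exceeds_by d lam (Suc a mod length lam) (Suc b mod length lam)"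
  using assms unfolding exceeds_by_def omega_nth[OF assms(1,2)] omega_nth[OF assms(1,3)]
  by (auto simp: mod_Suc)

lemma spaced_omega:
  assumes "0 < k" "lam \<noteq> []" "spaced k d lam"
  shows "spaced k d (omega lam)"
proof (rule spaced_relabel[where \<sigma> = "\<lambda>a. Suc a mod length lam"])
  show "bij_betw (\<lambda>a. Suc a mod length lam) {..<length (omega lam)} {..<length lam}"
    unfolding length_omega[OF assms(2)] bij_betw_def
    by (intro conjI endo_inj_surj) (auto simp: inj_on_def mod_Suc split: if_splits)
qed (use assms exceeds_by_omega_iff length_omega in auto)

lemma spaced_swap_at:
  assumes "0 < k" and i: "Suc i < length lam" and ascent: "lam ! i < lam ! Suc i"
    and "spaced k d lam"
  shows "spaced k d (swap_at i lam)"
proof (rule spaced_relabel[where \<sigma> = "Transposition.transpose i (Suc i)"])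
  show "bij_betw (Transposition.transpose i (Suc i)) {..<length (swap_at i lam)} {..<length lam}"
    using i unfolding swap_at_def by simp
  show "outranks (swap_at i lam) a b \<longleftrightarrow>
      outranks lam (Transposition.transpose i (Suc i) a) (Transposition.transpose i (Suc i) b)"
    if "a < length (swap_at i lam)" "b < length (swap_at i lam)" for a b
    using that i ascent unfolding exceeds_by_def swap_at_def transpose_def
    by (auto simp: nth_list_update)
  show "exceeds_by d (swap_at i lam) a b"
    if "a < length (swap_at i lam)" "b < length (swap_at i lam)" "outranks (swap_at i lam) a b"
      "exceeds_by d lam (Transposition.transpose i (Suc i) a) (Transposition.transpose i (Suc i) b)"
    for a b
    using that i ascent unfolding exceeds_by_def swap_at_def transpose_def
    by (auto simp: nth_list_update split: if_splits)
qed (use assms in auto)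

lemma tau_powi_eq_1_imp_dvd:
  assumes "2 \<le> r" "tau r powi m = 1"
  shows "int (r - 1) dvd m"
proof -
  obtain N :: int where "of_int m * (2 * pi / real (r - 1)) = of_int N * (2 * pi)"
    using assms(2) unfolding tau_def cis_power_int cis_eq_1_iff by blast
  moreover have "real (r - 1) > 0" using assms(1) by simp
  ultimately have "real_of_int m * (2 * pi) = (of_int N * real (r - 1)) * (2 * pi)"
    by (simp add: field_simps)
  then have "real_of_int m = of_int N * real (r - 1)"
    by simp
  then have "m = N * int (r - 1)"
    by (metis of_int_eq_iff of_int_mult of_int_of_nat_eq)
  then show ?thesis by simp
qed

lemma u_ratio_eq:
  "u_ratio k r lam i = (tau r powi (lam ! Suc i - lam ! i),
     (of_int (int (rank_pos lam i) - int (rank_pos lam (Suc i))) * of_nat (r - 1)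
       - of_int (lam ! Suc i - lam ! i) * of_nat (k + 1)) / of_nat (gg k r))"
proof -
  have "tau r \<noteq> 0" unfolding tau_def by simp
  then have "tau r powi (- lam ! i) / tau r powi (- lam ! Suc i) = tau r powi (lam ! Suc i - lam ! i)"
    by (simp flip: power_int_diff)
  moreover have "(of_nat (gg k r) :: rat) \<noteq> 0" unfolding gg_def by simp
  then have "snd (u_ratio k r lam i) = ((rho lam (Suc i) - rho lam i) * of_nat (r - 1)
      - of_int (lam ! Suc i - lam ! i) * of_nat (k + 1)) / of_nat (gg k r)"
    unfolding u_ratio_def mono_div_def u_x_def mono_mult_def t_pow_def q_pow_def
    by (simp add: field_simps)
  moreover have "rho lam (Suc i) - rho lam i = of_int (int (rank_pos lam i) - int (rank_pos lam (Suc i)))"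
    unfolding rho_def by simp
  ultimately show ?thesis
    unfolding prod_eq_iff by (simp add: u_ratio_def mono_div_def u_x_def mono_mult_def t_pow_def q_pow_def)
qed

text \<open>At a blocked ascent the \<open>\<tau>\<close>-part forces \<open>\<lambda>(i+1) - \<lambda>(i) = N(r - 1)\<close> with \<open>N \<ge> 1\<close>, and the exponent
  of \<open>u\<close> forces the rank gap \<open>N(k + 1) + e \<ge> Nk\<close> with \<open>|e| \<le> 1\<close>; spacing then makes the
  difference exceed \<open>N(r - 1)\<close>.\<close>

lemma ascent_not_blocked:
  assumes "0 < k" "2 \<le> r" and spaced: "spaced k (int r - 1) lam"
    and i: "Suc i < length lam" and ascent: "lam ! i < lam ! Suc i"
  shows "u_ratio k r lam i \<notin> {(1, 0), t_pow k r 1, t_pow k r (-1)}"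
proof
  define D where "D = lam ! Suc i - lam ! i"
  define \<rho> where "\<rho> = int (rank_pos lam i) - int (rank_pos lam (Suc i))"
  define R where "R = int r - 1"
  have R: "R > 0" "of_nat (r - 1) = (of_int R :: rat)" "int (r - 1) = R"
    using assms(2) unfolding R_def by (auto simp: of_nat_diff)
  have g: "(of_nat (gg k r) :: rat) \<noteq> 0" unfolding gg_def by simp
  assume "u_ratio k r lam i \<in> {(1, 0), t_pow k r 1, t_pow k r (-1)}"
  also have "{(1, 0), t_pow k r 1, t_pow k r (-1)} =
      (\<lambda>e. (1, of_int e * of_int R / of_nat (gg k r))) ` {-1, 0, 1}"
    unfolding t_pow_def R(2) by auto
  finally obtain e :: int where "e \<in> {-1, 0, 1}"
    and e: "u_ratio k r lam i = (1, of_int e * of_int R / of_nat (gg k r))"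
    by blast
  have "tau r powi D = 1" using e unfolding u_ratio_eq D_def by simp
  then obtain N where N: "D = N * R" using tau_powi_eq_1_imp_dvd assms(2) R(3) by fastforce
  have "N > 0" using N R(1) ascent unfolding D_def by (metis diff_gt_0_iff_gt zero_less_mult_pos2)
  have "(of_int \<rho> * of_int R - of_int D * of_nat (k + 1)) / of_nat (gg k r)
      = (of_int e * of_int R / of_nat (gg k r) :: rat)"
    using e unfolding u_ratio_eq \<rho>_def D_def R(2) by simp
  then have "of_int (\<rho> * R - N * R * int (k + 1)) = (of_int (e * R) :: rat)"
    using g unfolding N by (simp add: divide_simps)
  then have "\<rho> * R = (N * int (k + 1) + e) * R"
    unfolding of_int_eq_iff by (simp add: algebra_simps)
  then have "\<rho> = N * int (k + 1) + e" using R(1) by simp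
  then have "int (rank_pos lam (Suc i) + nat N * k) \<le> int (rank_pos lam i)"
    using \<open>N > 0\<close> \<open>e \<in> {-1, 0, 1}\<close> unfolding \<rho>_def by (auto simp: algebra_simps)
  then have "rank_pos lam (Suc i) + nat N * k \<le> rank_pos lam i"
    by (simp only: of_nat_le_iff)
  then have "exceeds_by (int (nat N) * R) lam (Suc i) i"
    using spaced_exceeds_by_mult[OF spaced[folded R_def], of "nat N" "Suc i" i] \<open>N > 0\<close> i by simp
  then show False using N \<open>N > 0\<close> unfolding exceeds_by_def D_def by simp
qed

lemma intertwined_refl: "intertwined k r lam lam"
  unfolding intertwined_def by simp

lemma intertwined_sym: "intertwined k r lam mu \<Longrightarrow> intertwined k r mu lam"
  unfolding intertwined_def by (rule equivclp_sym)

lemma intertwined_trans: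
  "intertwined k r lam mu \<Longrightarrow> intertwined k r mu nu \<Longrightarrow> intertwined k r lam nu"
  unfolding intertwined_def by (rule equivclp_trans)

lemma intertwin_step_imp_intertwined: "intertwin_step k r lam mu \<Longrightarrow> intertwined k r lam mu"
  unfolding intertwined_def by (rule r_into_equivclp)

lemma intertwined_swap_at_ascent:
  assumes "0 < k" "2 \<le> r" "spaced k (int r - 1) lam"
    and i: "Suc i < length lam" and ascent: "lam ! i < lam ! Suc i"
  shows "intertwined k r lam (swap_at i lam)"
proof -
  have "swap_at i lam ! i \<noteq> lam ! i"
    using i ascent unfolding swap_at_def by simp
  then have "swap_at i lam \<noteq> lam" by auto
  with swap_step[OF i] ascent_not_blocked[OF assms] show ?thesis
    by (blast intro: intertwin_step_imp_intertwined)
qed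

lemma omega_pow_eq:
  "j \<le> length v \<Longrightarrow> (omega ^^ j) v = drop j v @ map (\<lambda>x. x + 1) (take j v)"
proof (induction j)
  case 0
  then show ?case by simp
next
  case (Suc j)
  then have "drop j v \<noteq> []" by simp
  with Suc show ?case
    unfolding omega_def
    by (simp add: hd_drop_conv_nth drop_Suc tl_drop take_Suc_conv_app_nth)
qed

lemma omega_pow_nonempty: "lam \<noteq> [] \<Longrightarrow> (omega ^^ j) lam \<noteq> []"
  by (cases j) (simp_all add: omega_def)

lemma intertwined_omega_pow:
  assumes "lam \<noteq> []"
  shows "intertwined k r lam ((omega ^^ j) lam)"
proof (induction j)
  case 0
  then show ?case by (simp add: intertwined_refl)
next
  case (Suc j)
  have "intertwin_step k r ((omega ^^ j) lam) ((omega ^^ Suc j) lam)"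
    using omega_step[OF omega_pow_nonempty[OF assms]] by simp
  with Suc show ?case by (blast intro: intertwined_trans intertwin_step_imp_intertwined)
qed

lemma spaced_omega_pow:
  assumes "0 < k" "lam \<noteq> []" "spaced k d lam"
  shows "spaced k d ((omega ^^ j) lam)"
  by (induction j) (simp_all add: assms spaced_omega omega_pow_nonempty)

lemma intertwined_translate_nat:
  assumes "lam \<noteq> []"
  shows "intertwined k r lam (map (\<lambda>x. x + int m) lam)"
proof (induction m)
  case 0
  then show ?case by (simp add: intertwined_refl)
next
  case (Suc m)
  have "intertwined k r (map (\<lambda>x. x + int m) lam) (map (\<lambda>x. x + int (Suc m)) lam)"
    using intertwined_omega_pow[of "map (\<lambda>x. x + int m) lam" k r "length lam"] assms
    by (simp add: omega_pow_eq comp_def add_ac)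
  with Suc show ?case by (rule intertwined_trans)
qed

lemma intertwined_translate:
  assumes "lam \<noteq> []"
  shows "intertwined k r lam (map (\<lambda>x. x + c) lam)"
proof (cases "c \<ge> 0")
  case True
  then show ?thesis using intertwined_translate_nat[OF assms, of k r "nat c"] by simp
next
  case False
  have "intertwined k r (map (\<lambda>x. x + c) lam) (map (\<lambda>x. x + int (nat (- c))) (map (\<lambda>x. x + c) lam))"
    using assms by (intro intertwined_translate_nat) simp
  then show ?thesis using False by (simp add: comp_def intertwined_sym)
qed

definition index_weight :: "int list \<Rightarrow> int" where
  "index_weight v = (\<Sum>x<length v. int x * v ! x)"

lemma index_weight_update:
  assumes "j < length v"
  shows "index_weight (v[j := y]) = index_weight v + int j * (y - v ! j)"
proof -
  have "index_weight (v[j := y]) = (\<Sum>x<length v. int x * v ! x + (if x = j then int j * (y - v ! j) else 0))"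
    unfolding index_weight_def by (intro sum.cong) (auto simp: nth_list_update algebra_simps)
  also have "\<dots> = index_weight v + int j * (y - v ! j)"
    unfolding index_weight_def sum.distrib using assms by simp
  finally show ?thesis .
qed

lemma index_weight_swap_at:
  assumes "Suc i < length v"
  shows "index_weight (swap_at i v) = index_weight v - (v ! Suc i - v ! i)"
  using assms unfolding swap_at_def
  by (simp add: index_weight_update nth_list_update algebra_simps)

lemma mset_swap_at: "Suc i < length v \<Longrightarrow> mset (swap_at i v) = mset v"
  unfolding swap_at_def using mset_swap[of "Suc i" v i] by simp

text \<open>Swapping an ascent lowers \<open>index_weight\<close>, so a minimiser has no ascent.\<close>

lemma obtain_sorted_intertwined:
  assumes "0 < k" "2 \<le> r" and spaced: "spaced k (int r - 1) lam"
  obtains v where "sorted_wrt (\<ge>) v" "mset v = mset lam" "spaced k (int r - 1) v"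
    "intertwined k r lam v"
proof -
  define A where "A = {v. mset v = mset lam \<and> spaced k (int r - 1) v \<and> intertwined k r lam v}"
  have "A \<subseteq> {v. set v \<subseteq> set lam \<and> length v = length lam}"
    unfolding A_def by (auto dest: mset_eq_setD mset_eq_length)
  then have "finite A" using finite_lists_length_eq[of "set lam"] finite_subset by blast
  moreover have "lam \<in> A" unfolding A_def using spaced by (simp add: intertwined_refl)
  ultimately obtain v where "v \<in> A" and v_min: "\<And>u. u \<in> A \<Longrightarrow> \<not> index_weight u < index_weight v"
    using arg_min_if_finite[of A index_weight] by blast
  have "sorted_wrt (\<ge>) v"
  proof (rule ccontr)
    assume "\<not> sorted_wrt (\<ge>) v"
    then obtain i where i: "Suc i < length v" and ascent: "v ! i < v ! Suc i"
      by (auto simp: sorted_wrt_iff_nth_Suc_transp not_le)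
    have "swap_at i v \<in> A"
      using \<open>v \<in> A\<close> i ascent assms(1,2) unfolding A_def
      by (auto simp: mset_swap_at spaced_swap_at intro: intertwined_trans intertwined_swap_at_ascent)
    moreover have "index_weight (swap_at i v) < index_weight v"
      using index_weight_swap_at[OF i] ascent by simp
    ultimately show False using v_min by blast
  qed
  with \<open>v \<in> A\<close> show thesis using that unfolding A_def by blast
qed

lemma sorted_desc_unique:
  fixes u v :: "'a::linorder list"
  assumes "sorted_wrt (\<ge>) u" "sorted_wrt (\<ge>) v" "mset u = mset v"
  shows "u = v"
proof -
  have "sort (rev v) = rev u"
    using assms by (intro properties_for_sort) (simp_all add: sorted_wrt_rev)
  moreover have "sort (rev v) = rev v"
    using assms(2) by (simp add: sorted_sort_id sorted_wrt_rev)
  ultimately show ?thesis by simp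
qed

definition raise_prefix :: "nat \<Rightarrow> int list \<Rightarrow> int list" where
  "raise_prefix j v = map (\<lambda>x. x + 1) (take j v) @ drop j v"

lemma sorted_raise_prefix:
  assumes "sorted_wrt (\<ge>) v"
  shows "sorted_wrt (\<ge>) (raise_prefix j v)"
proof -
  have "sorted_wrt (\<ge>) (take j v @ drop j v)" using assms by simp
  then show ?thesis
    unfolding raise_prefix_def sorted_wrt_append by (force simp: sorted_wrt_map)
qed

lemma spaced_intertwined_raise_prefix:
  assumes "0 < k" "2 \<le> r" "spaced k (int r - 1) v" "sorted_wrt (\<ge>) v"
    and "v \<noteq> []" "j \<le> length v"
  shows "spaced k (int r - 1) (raise_prefix j v) \<and> intertwined k r v (raise_prefix j v)"
proof -
  obtain u where u: "sorted_wrt (\<ge>) u" "mset u = mset ((omega ^^ j) v)"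
    "spaced k (int r - 1) u" "intertwined k r ((omega ^^ j) v) u"
    using obtain_sorted_intertwined[OF assms(1,2) spaced_omega_pow[OF assms(1,5,3)]] .
  have "mset ((omega ^^ j) v) = mset (raise_prefix j v)"
    using assms(6) unfolding raise_prefix_def by (simp add: omega_pow_eq)
  then have "u = raise_prefix j v"
    using u(1,2) sorted_raise_prefix[OF assms(4)] by (simp add: sorted_desc_unique)
  then show ?thesis
    using u(3,4) intertwined_omega_pow[OF assms(5)] by (blast intro: intertwined_trans)
qed

definition gap :: "int list \<Rightarrow> nat \<Rightarrow> int" where
  "gap v j = v ! j - v ! Suc j"

definition staircase :: "int \<Rightarrow> nat \<Rightarrow> int list" where
  "staircase G n = map (\<lambda>x. int (n - 1 - x) * G) [0..<n]"

lemma nth_eq_last_plus_gaps: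
  assumes gaps: "\<forall>j. Suc j < length v \<longrightarrow> gap v j = G" and "x < length v"
  shows "v ! x = last v + int (length v - 1 - x) * G"
  using assms(2)
proof (induction "length v - 1 - x" arbitrary: x)
  case 0
  then have "x = length v - 1" "v \<noteq> []" by auto
  then show ?case by (simp add: last_conv_nth)
next
  case (Suc d)
  then have x: "Suc x < length v" "d = length v - 1 - Suc x" by auto
  have "v ! x = v ! Suc x + G" using gaps x(1) unfolding gap_def by force
  moreover have "v ! Suc x = last v + int d * G" using Suc(1)[OF x(2,1)] x(2) by simp
  ultimately show ?case unfolding Suc(2)[symmetric] by (simp add: algebra_simps)
qed

lemma equal_gaps_imp_staircase:
  assumes "\<forall>j. Suc j < length v \<longrightarrow> gap v j = G"
  shows "v = map (\<lambda>x. x + last v) (staircase G (length v))"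
  by (rule nth_equalityI) (simp_all add: staircase_def nth_eq_last_plus_gaps[OF assms])

lemma gap_raise_prefix:
  assumes "Suc j < length v" "Suc j' < length v"
  shows "gap (raise_prefix (Suc j) v) j' = gap v j' + (if j' = j then 1 else 0)"
  using assms unfolding gap_def raise_prefix_def by (auto simp: nth_append)

lemma intertwined_staircase:
  assumes "0 < k" "2 \<le> r"
  shows "spaced k (int r - 1) v \<Longrightarrow> sorted_wrt (\<ge>) v \<Longrightarrow> v \<noteq> [] \<Longrightarrow>
    \<forall>j. Suc j < length v \<longrightarrow> gap v j \<le> G \<Longrightarrow> intertwined k r v (staircase G (length v))"
proof (induction "\<Sum>j<length v - 1. nat (G - gap v j)" arbitrary: v rule: less_induct)
  case less
  show ?case
  proof (cases "\<exists>j. Suc j < length v \<and> gap v j < G")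
    case True
    then obtain j where j: "Suc j < length v" "gap v j < G" by blast
    let ?w = "raise_prefix (Suc j) v"
    have w: "spaced k (int r - 1) ?w" "intertwined k r v ?w"
      using spaced_intertwined_raise_prefix[OF assms less.prems(1-3)] j(1) by auto
    have len: "length ?w = length v" unfolding raise_prefix_def by simp
    have gaps: "gap ?w j' = gap v j' + (if j' = j then 1 else 0)" if "Suc j' < length v" for j'
      using gap_raise_prefix[OF j(1) that] .
    have "(\<Sum>j'<length ?w - 1. nat (G - gap ?w j')) < (\<Sum>j'<length v - 1. nat (G - gap v j'))"
      unfolding len
    proof (rule sum_strict_mono_ex1)
      show "\<forall>j'\<in>{..<length v - 1}. nat (G - gap ?w j') \<le> nat (G - gap v j')"
        using gaps by auto
      show "\<exists>j'\<in>{..<length v - 1}. nat (G - gap ?w j') < nat (G - gap v j')"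
        using gaps[of j] j by (intro bexI[of _ j]) auto
    qed simp
    moreover have "sorted_wrt (\<ge>) ?w" using sorted_raise_prefix[OF less.prems(2)] .
    moreover have "\<forall>j'. Suc j' < length ?w \<longrightarrow> gap ?w j' \<le> G"
      using gaps less.prems(4) j unfolding len by auto
    ultimately have "intertwined k r ?w (staircase G (length ?w))"
      using less.hyps w(1) less.prems(3) len by fastforce
    then show ?thesis using w(2) len by (metis intertwined_trans)
  next
    case False
    then have "\<forall>j. Suc j < length v \<longrightarrow> gap v j = G" using less.prems(4) by force
    then have "staircase G (length v) = map (\<lambda>x. x + - last v) v"
      by (subst (2) equal_gaps_imp_staircase) (auto simp: comp_def)
    then show ?thesis using intertwined_translate[OF less.prems(3)] by metis
  qed
qed

lemma obtain_intertwined_staircases: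
  assumes "0 < k" "2 \<le> r" "lam \<noteq> []" "spaced k (int r - 1) lam"
  obtains G0 where "\<And>G. G0 \<le> G \<Longrightarrow> intertwined k r lam (staircase G (length lam))"
proof -
  obtain v where v: "sorted_wrt (\<ge>) v" "mset v = mset lam" "spaced k (int r - 1) v"
    "intertwined k r lam v"
    using obtain_sorted_intertwined[OF assms(1,2,4)] .
  have len: "length v = length lam" using mset_eq_length[OF v(2)] .
  then have "v \<noteq> []" using assms(3) by auto
  have "intertwined k r lam (staircase G (length lam))" if "Max (gap v ` {..<length v}) \<le> G" for G
  proof -
    have "gap v j \<le> G" if "Suc j < length v" for j
    proof -
      have "gap v j \<le> Max (gap v ` {..<length v})" using that by (intro Max_ge) auto
      with \<open>Max (gap v ` {..<length v}) \<le> G\<close> show ?thesis by simp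
    qed
    then have "intertwined k r v (staircase G (length v))"
      using intertwined_staircase[OF assms(1,2) v(3,1) \<open>v \<noteq> []\<close>] by blast
    with v(4) show ?thesis unfolding len by (rule intertwined_trans)
  qed
  then show thesis using that by blast
qed

theorem lemma4p5:
  fixes n k r :: nat and lam mu :: "int list"
  assumes "1 \<le> k" and "k \<le> n - 1" and "2 \<le> r"
    and "lam \<in> B n k r" and "mu \<in> B n k r"
  shows "intertwined k r lam mu"
proof -
  have k: "0 < k" using assms(1) by simp
  have lam: "length lam = n" "spaced k (int r - 1) lam"
    and mu: "length mu = n" "spaced k (int r - 1) mu"
    using assms(4,5) unfolding mem_B_iff[OF assms(3)] by auto
  have "lam \<noteq> []" "mu \<noteq> []" using lam(1) mu(1) assms(1,2) by auto
  obtain G1 where G1: "\<And>G. G1 \<le> G \<Longrightarrow> intertwined k r lam (staircase G n)"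
    using obtain_intertwined_staircases[OF k assms(3) \<open>lam \<noteq> []\<close> lam(2)] lam(1) by blast
  obtain G2 where G2: "\<And>G. G2 \<le> G \<Longrightarrow> intertwined k r mu (staircase G n)"
    using obtain_intertwined_staircases[OF k assms(3) \<open>mu \<noteq> []\<close> mu(2)] mu(1) by blast
  have "intertwined k r lam (staircase (max G1 G2) n)" "intertwined k r mu (staircase (max G1 G2) n)"
    using G1 G2 by simp_all
  then show ?thesis by (blast intro: intertwined_trans intertwined_sym)
qed

end
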